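(* For any metrized graph $\Gamma$ with $v$ vertices, $$2Kf(\Gamma)= v \cdot y(\Gamma)+\sum_{e_i \in E(\Gamma)} \frac{R_i}{L_i+R_i}\sum_{p \in V(\overline{\Gamma}_i)} r_{\overline{\Gamma}_i}(p,\bar p_i).$$
   Context: A metrized graph $\Gamma$ is a finite connected graph (multiple edges and self-loops allowed) each of whose edges is identified with a closed segment of positive length, with a finite nonempty vertex set $V(\Gamma)$ containing every point of valence $\neq2$; $v=\#V(\Gamma)$, $E(\Gamma)$ its edge set, $L_i$ the length of $e_i$. $r$ (resp. $r_\beta$) denotes effective resistance in $\Gamma$ (resp. in $\beta$), edges being resistors of resistance equal to length. For an edge $e_i$ with end points $p_i,q_i$: if $\Gamma-e_i$ (interior deleted) is connected, $R_i$ is the effective resistance between $p_i,q_i$ in $\Gamma-e_i$, $R_{a_i,p}=\hat j_{p_i}(p,q_i)$, $R_{b_i,p}=\hat j_{q_i}(p,p_i)$, with $\hat j_z(x,y)$ the voltage function of $\Gamma-e_i$ (potential at $x$ when unit current enters at $y$ and exits at $z$, potential $0$ at $z$); if $e_i$ is a bridge, $R_{a_i,p}=0,R_{b_i,p}=R_i$ for $p$ in the component of $\Gamma-e_i$ containing $p_i$, and $R_{a_i,p}=R_i,R_{b_i,p}=0$ otherwise, with every expression in $R_i$ interpreted as its limit as $R_i\to\infty$; for a self-loop $R_i=0$. $Kf(\Gamma)=\frac12\sum_{p,q\in V(\Gamma)}r(p,q)$. $\overline\Gamma_i$ is obtained by contracting $e_i$ to a point, with vertex set the image of $V(\Gamma)$,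 and $\bar p_i$ is the vertex into which $p_i$ (and $q_i$) is contracted. For a fixed vertex $p$ (independent of choice), $y(\Gamma)=\frac14\sum_{e_i}\frac{L_iR_i^2}{(L_i+R_i)^2}+\frac34\sum_{e_i}\frac{L_i(R_{a_i,p}-R_{b_i,p})^2}{(L_i+R_i)^2}$. *)

theory Defs
  imports Complex_Main
begin

text \<open>A metrized graph is modelled as a finite resistive network:
  vertex set V, edge index set E, end points src/tgt, and lengths L.
  Edge interiors consist of points of valence 2, so effective resistances
  between vertices of the metrized graph coincide with those of this network.\<close>

definition graph_adj :: "'e set \<Rightarrow> ('e \<Rightarrow> 'v) \<Rightarrow> ('e \<Rightarrow> 'v) \<Rightarrow> ('v \<times> 'v) set" where
  "graph_adj E src tgt = {(a, b). \<exists>e\<in>E. (src e = a \<and> tgt e = b) \<or> (src e = b \<and> tgt e = a)}"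

definition graph_connected :: "'v set \<Rightarrow> 'e set \<Rightarrow> ('e \<Rightarrow> 'v) \<Rightarrow> ('e \<Rightarrow> 'v) \<Rightarrow> bool" where
  "graph_connected V E src tgt = (\<forall>x\<in>V. \<forall>y\<in>V. (x, y) \<in> (graph_adj E src tgt)\<^sup>*)"

definition metrized_graph ::
  "'v set \<Rightarrow> 'e set \<Rightarrow> ('e \<Rightarrow> 'v) \<Rightarrow> ('e \<Rightarrow> 'v) \<Rightarrow> ('e \<Rightarrow> real) \<Rightarrow> bool" where
  "metrized_graph V E src tgt L =
     (finite V \<and> V \<noteq> {} \<and> finite E \<and>
      (\<forall>e\<in>E. src e \<in> V \<and> tgt e \<in> V \<and> L e > 0) \<and>
      graph_connected V E src tgt)"

definition kirchhoff ::
  "'v set \<Rightarrow> 'e set \<Rightarrow> ('e \<Rightarrow> 'v) \<Rightarrow> ('e \<Rightarrow> 'v) \<Rightarrow> ('e \<Rightarrow> real) \<Rightarrow> 'v \<Rightarrow> 'v \<Rightarrow> ('v \<Rightarrow> real) \<Rightarrow> bool" where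
  "kirchhoff V E src tgt L z y u =
     ((\<forall>x\<in>V. (\<Sum>e\<in>E. (if src e = x then (u x - u (tgt e)) / L e else 0)
                    + (if tgt e = x then (u x - u (src e)) / L e else 0))
             = (if x = y then 1 else 0) - (if x = z then 1 else 0))
      \<and> u z = 0 \<and> (\<forall>x. x \<notin> V \<longrightarrow> u x = 0))"

text \<open>Voltage function j_z(x,y): potential at x when unit current enters at y
  and exits at z, potential 0 at z.\<close>
definition voltage ::
  "'v set \<Rightarrow> 'e set \<Rightarrow> ('e \<Rightarrow> 'v) \<Rightarrow> ('e \<Rightarrow> 'v) \<Rightarrow> ('e \<Rightarrow> real) \<Rightarrow> 'v \<Rightarrow> 'v \<Rightarrow> 'v \<Rightarrow> real" where
  "voltage V E src tgt L z x y = (THE u. kirchhoff V E src tgt L z y u) x"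

definition eff_res ::
  "'v set \<Rightarrow> 'e set \<Rightarrow> ('e \<Rightarrow> 'v) \<Rightarrow> ('e \<Rightarrow> 'v) \<Rightarrow> ('e \<Rightarrow> real) \<Rightarrow> 'v \<Rightarrow> 'v \<Rightarrow> real" where
  "eff_res V E src tgt L p q = voltage V E src tgt L q p p"

definition kirchhoff_index ::
  "'v set \<Rightarrow> 'e set \<Rightarrow> ('e \<Rightarrow> 'v) \<Rightarrow> ('e \<Rightarrow> 'v) \<Rightarrow> ('e \<Rightarrow> real) \<Rightarrow> real" where
  "kirchhoff_index V E src tgt L = (1/2) * (\<Sum>p\<in>V. \<Sum>q\<in>V. eff_res V E src tgt L p q)"

definition is_bridge ::
  "'v set \<Rightarrow> 'e set \<Rightarrow> ('e \<Rightarrow> 'v) \<Rightarrow> ('e \<Rightarrow> 'v) \<Rightarrow> 'e \<Rightarrow> bool" where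
  "is_bridge V E src tgt e = (\<not> graph_connected V (E - {e}) src tgt)"

definition R_edge ::
  "'v set \<Rightarrow> 'e set \<Rightarrow> ('e \<Rightarrow> 'v) \<Rightarrow> ('e \<Rightarrow> 'v) \<Rightarrow> ('e \<Rightarrow> real) \<Rightarrow> 'e \<Rightarrow> real" where
  "R_edge V E src tgt L e = eff_res V (E - {e}) src tgt L (src e) (tgt e)"

definition R_a ::
  "'v set \<Rightarrow> 'e set \<Rightarrow> ('e \<Rightarrow> 'v) \<Rightarrow> ('e \<Rightarrow> 'v) \<Rightarrow> ('e \<Rightarrow> real) \<Rightarrow> 'e \<Rightarrow> 'v \<Rightarrow> real" where
  "R_a V E src tgt L e p = voltage V (E - {e}) src tgt L (src e) p (tgt e)"

definition R_b ::
  "'v set \<Rightarrow> 'e set \<Rightarrow> ('e \<Rightarrow> 'v) \<Rightarrow> ('e \<Rightarrow> 'v) \<Rightarrow> ('e \<Rightarrow> real) \<Rightarrow> 'e \<Rightarrow> 'v \<Rightarrow> real" where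
  "R_b V E src tgt L e p = voltage V (E - {e}) src tgt L (tgt e) p (src e)"

text \<open>Edge terms; for a bridge, the limit as R_i tends to infinity is used
  (for a bridge, one of R_{a_i,p}, R_{b_i,p} is 0 and the other is R_i).\<close>
definition y_term1 ::
  "'v set \<Rightarrow> 'e set \<Rightarrow> ('e \<Rightarrow> 'v) \<Rightarrow> ('e \<Rightarrow> 'v) \<Rightarrow> ('e \<Rightarrow> real) \<Rightarrow> 'e \<Rightarrow> real" where
  "y_term1 V E src tgt L e =
     (if is_bridge V E src tgt e then L e
      else (let R = R_edge V E src tgt L e in L e * R\<^sup>2 / (L e + R)\<^sup>2))"

definition y_term2 ::
  "'v set \<Rightarrow> 'e set \<Rightarrow> ('e \<Rightarrow> 'v) \<Rightarrow> ('e \<Rightarrow> 'v) \<Rightarrow> ('e \<Rightarrow> real) \<Rightarrow> 'e \<Rightarrow> 'v \<Rightarrow> real" where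
  "y_term2 V E src tgt L e p =
     (if is_bridge V E src tgt e then L e
      else (let R = R_edge V E src tgt L e in
            L e * (R_a V E src tgt L e p - R_b V E src tgt L e p)\<^sup>2 / (L e + R)\<^sup>2))"

definition coeff_edge ::
  "'v set \<Rightarrow> 'e set \<Rightarrow> ('e \<Rightarrow> 'v) \<Rightarrow> ('e \<Rightarrow> 'v) \<Rightarrow> ('e \<Rightarrow> real) \<Rightarrow> 'e \<Rightarrow> real" where
  "coeff_edge V E src tgt L e =
     (if is_bridge V E src tgt e then 1
      else (let R = R_edge V E src tgt L e in R / (L e + R)))"

definition y_inv ::
  "'v set \<Rightarrow> 'e set \<Rightarrow> ('e \<Rightarrow> 'v) \<Rightarrow> ('e \<Rightarrow> 'v) \<Rightarrow> ('e \<Rightarrow> real) \<Rightarrow> 'v \<Rightarrow> real" where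
  "y_inv V E src tgt L p =
     (1/4) * (\<Sum>e\<in>E. y_term1 V E src tgt L e) + (3/4) * (\<Sum>e\<in>E. y_term2 V E src tgt L e p)"

text \<open>Contraction of edge e: q_e is identified with p_e (bar p_e = src e).\<close>
definition contr_map :: "('e \<Rightarrow> 'v) \<Rightarrow> ('e \<Rightarrow> 'v) \<Rightarrow> 'e \<Rightarrow> 'v \<Rightarrow> 'v" where
  "contr_map src tgt e x = (if x = tgt e then src e else x)"

definition contr_V :: "'v set \<Rightarrow> ('e \<Rightarrow> 'v) \<Rightarrow> ('e \<Rightarrow> 'v) \<Rightarrow> 'e \<Rightarrow> 'v set" where
  "contr_V V src tgt e = contr_map src tgt e ` V"

definition contr_res ::
  "'v set \<Rightarrow> 'e set \<Rightarrow> ('e \<Rightarrow> 'v) \<Rightarrow> ('e \<Rightarrow> 'v) \<Rightarrow> ('e \<Rightarrow> real) \<Rightarrow> 'e \<Rightarrow> 'v \<Rightarrow> 'v \<Rightarrow> real" where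
  "contr_res V E src tgt L e a b =
     eff_res (contr_V V src tgt e) (E - {e})
       (contr_map src tgt e \<circ> src) (contr_map src tgt e \<circ> tgt) L a b"

end

theory Submission
  imports Defs "Jordan_Normal_Form.Determinant"
begin

text \<open>The identity is proved in the network of resistors \<open>L\<^sub>i\<close>, writing \<open>\<rho>\<^sub>i = r(p\<^sub>i, q\<^sub>i)\<close>.
  By the parallel law \<open>\<rho>\<^sub>i = L\<^sub>i R\<^sub>i / (L\<^sub>i + R\<^sub>i)\<close> (and \<open>\<rho>\<^sub>i = L\<^sub>i\<close> for a bridge) every
  edge term of \<open>y(\<Gamma>)\<close> and every coefficient \<open>R\<^sub>i / (L\<^sub>i + R\<^sub>i)\<close> becomes an expression in
  \<open>\<rho>\<^sub>i\<close>, \<open>L\<^sub>i\<close> and resistances of \<open>\<Gamma>\<close>; contracting \<open>e\<^sub>i\<close> gives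
  \<open>r\<^bsub>\<Gamma>\<^sub>i\<^esub>(x, p\<^sub>i) = r(x, p\<^sub>i) - \<Phi>\<^sub>i(x)\<^sup>2 / \<rho>\<^sub>i\<close>, where \<open>\<Phi>\<^sub>i\<close> is the voltage with sink \<open>p\<^sub>i\<close>
  and source \<open>q\<^sub>i\<close>.
  What remains is an identity between resistances of \<open>\<Gamma>\<close>, which follows from Green's identity:
  the Laplacian of \<open>r(\<cdot>, q)\<close> is \<open>H - 2 \<delta>\<^sub>q\<close> for a vertex weight \<open>H\<close> not depending on \<open>q\<close>, so the
  energy of \<open>r(\<cdot>, p)\<close> equals \<open>\<Sum>\<^sub>x r(x, p) H(x)\<close>, which is independent of \<open>p\<close>.\<close>

lemma graph_adj_sym: "(x, y) \<in> graph_adj E src tgt \<Longrightarrow> (y, x) \<in> graph_adj E src tgt"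
  unfolding graph_adj_def by auto

lemma graph_reachable_sym:
  "(x, y) \<in> (graph_adj E src tgt)\<^sup>* \<Longrightarrow> (y, x) \<in> (graph_adj E src tgt)\<^sup>*"
  by (induction rule: rtrancl_induct) (auto intro: converse_rtrancl_into_rtrancl graph_adj_sym)

lemma graph_reachable_const:
  assumes "(x, y) \<in> (graph_adj E src tgt)\<^sup>*" "\<forall>e\<in>E. u (src e) = u (tgt e)"
  shows "u x = u y"
  using assms(1) by (induction rule: rtrancl_induct) (use assms(2) in \<open>auto simp: graph_adj_def\<close>)

lemma reachable_delete_edge:
  assumes "(x, w) \<in> (graph_adj E src tgt)\<^sup>*"
  shows "(x, w) \<in> (graph_adj (E - {e}) src tgt)\<^sup>*
       \<or> (src e, w) \<in> (graph_adj (E - {e}) src tgt)\<^sup>*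
       \<or> (tgt e, w) \<in> (graph_adj (E - {e}) src tgt)\<^sup>*"
  using assms
proof (induction rule: rtrancl_induct)
  case (step y z)
  then obtain e' where e': "e' \<in> E" "(src e' = y \<and> tgt e' = z) \<or> (src e' = z \<and> tgt e' = y)"
    unfolding graph_adj_def by auto
  show ?case
  proof (cases "e' = e")
    case True
    then show ?thesis
      using e' by auto
  next
    case False
    then have "(y, z) \<in> graph_adj (E - {e}) src tgt"
      using e' unfolding graph_adj_def by auto
    then show ?thesis
      using step.IH by (meson rtrancl.rtrancl_into_rtrancl)
  qed
qed simp

lemma bridge_ends_unreachable:
  assumes "graph_connected V E src tgt" "src e \<in> V" "is_bridge V E src tgt e"
  shows "(tgt e, src e) \<notin> (graph_adj (E - {e}) src tgt)\<^sup>*"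
proof
  let ?R = "(graph_adj (E - {e}) src tgt)\<^sup>*"
  assume "(tgt e, src e) \<in> ?R"
  then have from_src: "(src e, w) \<in> ?R" if "w \<in> V" for w
    using reachable_delete_edge[of "src e" w E src tgt e] assms(1,2) that
    unfolding graph_connected_def by (meson rtrancl_trans graph_reachable_sym)
  have "graph_connected V (E - {e}) src tgt"
    unfolding graph_connected_def
    using from_src by (meson rtrancl_trans graph_reachable_sym)
  with assms(3) show False
    unfolding is_bridge_def by blast
qed

lemma reachable_contract_edge:
  assumes "(x, y) \<in> (graph_adj E src tgt)\<^sup>*"
  shows "(contr_map src tgt e x, contr_map src tgt e y)
           \<in> (graph_adj (E - {e}) (contr_map src tgt e \<circ> src) (contr_map src tgt e \<circ> tgt))\<^sup>*"
  using assms
proof (induction rule: rtrancl_induct)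
  case (step y z)
  then obtain e' where e': "e' \<in> E" "(src e' = y \<and> tgt e' = z) \<or> (src e' = z \<and> tgt e' = y)"
    unfolding graph_adj_def by auto
  show ?case
  proof (cases "e' = e")
    case True
    then have "contr_map src tgt e y = contr_map src tgt e z"
      using e' unfolding contr_map_def by auto
    then show ?thesis
      using step.IH by simp
  next
    case False
    then have "(contr_map src tgt e y, contr_map src tgt e z)
                 \<in> graph_adj (E - {e}) (contr_map src tgt e \<circ> src) (contr_map src tgt e \<circ> tgt)"
      using e' unfolding graph_adj_def by auto
    then show ?thesis
      using step.IH by (meson rtrancl.rtrancl_into_rtrancl)
  qed
qed simp

definition laplacian ::
  "'e set \<Rightarrow> ('e \<Rightarrow> 'v) \<Rightarrow> ('e \<Rightarrow> 'v) \<Rightarrow> ('e \<Rightarrow> real) \<Rightarrow> ('v \<Rightarrow> real) \<Rightarrow> 'v \<Rightarrow> real" where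
  "laplacian E src tgt L u x =
     (\<Sum>e\<in>E. (if src e = x then (u x - u (tgt e)) / L e else 0)
           + (if tgt e = x then (u x - u (src e)) / L e else 0))"

lemma kirchhoff_iff_laplacian:
  "kirchhoff V E src tgt L z y u \<longleftrightarrow>
     (\<forall>x\<in>V. laplacian E src tgt L u x = (if x = y then 1 else 0) - (if x = z then 1 else 0))
     \<and> u z = 0 \<and> (\<forall>x. x \<notin> V \<longrightarrow> u x = 0)"
  by (simp add: kirchhoff_def laplacian_def)

lemma laplacian_affine:
  "laplacian E src tgt L (\<lambda>x. a * u x + b * w x + c) x =
     a * laplacian E src tgt L u x + b * laplacian E src tgt L w x"
  unfolding laplacian_def sum_distrib_left sum.distrib[symmetric]
  by (intro sum.cong) (auto simp: divide_inverse algebra_simps)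

lemma laplacian_const: "laplacian E src tgt L (\<lambda>_. c) x = 0"
  using laplacian_affine[of E src tgt L 0 "\<lambda>_. 0" 0 "\<lambda>_. 0" c x] by simp

lemma laplacian_scale: "laplacian E src tgt L (\<lambda>x. c * u x) x = c * laplacian E src tgt L u x"
  using laplacian_affine[of E src tgt L c u 0 u 0 x] by simp

lemma laplacian_sum:
  assumes "finite W"
  shows "laplacian E src tgt L (\<lambda>v. \<Sum>w\<in>W. f w v) x = (\<Sum>w\<in>W. laplacian E src tgt L (f w) x)"
  using assms
proof (induction rule: finite_induct)
  case empty
  then show ?case using laplacian_const[of E src tgt L 0] by simp
next
  case (insert a W)
  then show ?case
    using laplacian_affine[of E src tgt L 1 "f a" 1 "\<lambda>v. \<Sum>w\<in>W. f w v" 0 x] by simp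
qed

lemma laplacian_eq_0_if_const_on_edges:
  "\<forall>e\<in>E. u (src e) = u (tgt e) \<Longrightarrow> laplacian E src tgt L u x = 0"
  unfolding laplacian_def by (intro sum.neutral) auto

lemma laplacian_remove_edge:
  assumes "e \<in> E" "finite E"
  shows "laplacian (E - {e}) src tgt L u x = laplacian E src tgt L u x
           - ((if src e = x then (u x - u (tgt e)) / L e else 0)
              + (if tgt e = x then (u x - u (src e)) / L e else 0))"
  unfolding laplacian_def using assms by (simp add: sum_diff1)

lemma laplacian_contract_edge:
  assumes "W (src e) = W (tgt e)" "y \<noteq> tgt e"
  shows "laplacian E' (contr_map src tgt e \<circ> src) (contr_map src tgt e \<circ> tgt) L W y
       = laplacian E' src tgt L W y + (if y = src e then laplacian E' src tgt L W (tgt e) else 0)"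
proof -
  have W: "W (contr_map src tgt e w) = W w" for w
    using assms(1) unfolding contr_map_def by simp
  show ?thesis
  proof (cases "y = src e")
    case True
    have "laplacian E' (contr_map src tgt e \<circ> src) (contr_map src tgt e \<circ> tgt) L W y
        = laplacian E' src tgt L W y + laplacian E' src tgt L W (tgt e)"
      unfolding laplacian_def sum.distrib[symmetric] using True assms
      by (intro sum.cong refl) (auto simp: W contr_map_def)
    with True show ?thesis
      by simp
  next
    case False
    have "laplacian E' (contr_map src tgt e \<circ> src) (contr_map src tgt e \<circ> tgt) L W y
        = laplacian E' src tgt L W y"
      unfolding laplacian_def using False assms
      by (intro sum.cong refl) (auto simp: W contr_map_def)
    with False show ?thesis
      by simp
  qed
qed

lemma sum_of_bool_eq_mult:
  "finite A \<Longrightarrow> a \<in> A \<Longrightarrow> (\<Sum>x\<in>A. of_bool (x = a) * f x) = (f a :: real)"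
proof -
  assume "finite A" "a \<in> A"
  have "(\<Sum>x\<in>A. of_bool (x = a) * f x) = (\<Sum>x\<in>A. if x = a then f x else 0)"
    by (intro sum.cong) auto
  with \<open>finite A\<close> \<open>a \<in> A\<close> show ?thesis
    by simp
qed

lemma sum_mult_delta_diff:
  assumes "finite A" "y \<in> A" "z \<in> A"
  shows "(\<Sum>x\<in>A. f x * ((if x = y then 1 else 0) - (if x = z then 1 else 0))) = f y - (f z :: real)"
proof -
  have "(\<Sum>x\<in>A. f x * ((if x = y then 1 else 0) - (if x = z then 1 else 0)))
      = (\<Sum>x\<in>A. (if x = y then f x else 0) - (if x = z then f x else 0))"
    by (intro sum.cong) auto
  with assms show ?thesis
    by (simp add: sum_subtractf)
qed

lemma injective_linear_system_solvable:
  fixes M :: "'a \<Rightarrow> 'a \<Rightarrow> real"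
  assumes "finite V"
    and inj: "\<And>u. \<forall>x\<in>V. (\<Sum>w\<in>V. M x w * u w) = 0 \<Longrightarrow> \<forall>x\<in>V. u x = 0"
  shows "\<exists>u. \<forall>x\<in>V. (\<Sum>w\<in>V. M x w * u w) = b x"
proof -
  define n where "n = card V"
  obtain h where h: "bij_betw h {0..<n} V"
    using ex_bij_betw_nat_finite[OF assms(1)] unfolding n_def by blast
  define h' where "h' = inv_into {0..<n} h"
  have h'h: "h' (h i) = i" if "i < n" for i
    using bij_betw_inv_into_left[OF h] that unfolding h'_def by auto
  have hh': "h (h' w) = w" "h' w < n" if "w \<in> V" for w
    using bij_betw_inv_into_right[OF h] bij_betw_inv_into[OF h] that
    unfolding h'_def bij_betw_def by auto
  have hV: "h i \<in> V" if "i < n" for i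
    using h that unfolding bij_betw_def by auto
  define A where "A = mat n n (\<lambda>(i, j). M (h i) (h j))"
  define fun_of where "fun_of v w = v $ h' w" for v :: "real vec" and w
  have A: "A \<in> carrier_mat n n"
    unfolding A_def by simp
  have A_mult: "(A *\<^sub>v v) $ i = (\<Sum>w\<in>V. M (h i) w * fun_of v w)"
    if "v \<in> carrier_vec n" "i < n" for v i
  proof -
    have "(A *\<^sub>v v) $ i = (\<Sum>j\<in>{0..<n}. M (h i) (h j) * fun_of v (h j))"
      using that by (simp add: A_def scalar_prod_def fun_of_def h'h)
    also have "\<dots> = (\<Sum>w\<in>V. M (h i) w * fun_of v w)"
      using sum.reindex_bij_betw[OF h] .
    finally show ?thesis .
  qed
  have "det A \<noteq> 0"
  proof
    assume "det A = 0"
    then obtain v where v: "v \<in> carrier_vec n" "v \<noteq> 0\<^sub>v n" "A *\<^sub>v v = 0\<^sub>v n"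
      using det_0_iff_vec_prod_zero[OF A] by blast
    have "\<forall>x\<in>V. (\<Sum>w\<in>V. M x w * fun_of v w) = 0"
      using A_mult[OF v(1)] v(3) hh' by (metis index_zero_vec(1))
    then have "\<forall>x\<in>V. fun_of v x = 0"
      by (rule inj)
    then have "v = 0\<^sub>v n"
      using v(1) hV h'h unfolding fun_of_def by (intro eq_vecI) (auto, metis)
    with v(2) show False ..
  qed
  then obtain B where B: "B \<in> carrier_mat n n" "A * B = 1\<^sub>m n"
    using det_non_zero_imp_unit[OF A, of "()"] unfolding Units_def ring_mat_def by auto
  define rhs where "rhs = vec n (\<lambda>i. b (h i))"
  define v where "v = B *\<^sub>v rhs"
  have v: "v \<in> carrier_vec n" "A *\<^sub>v v = rhs"
    using A B unfolding v_def rhs_def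
    by (auto simp del: assoc_mult_mat_vec simp: assoc_mult_mat_vec[symmetric])
  have "\<forall>x\<in>V. (\<Sum>w\<in>V. M x w * fun_of v w) = b x"
    using A_mult[OF v(1)] v(2) hh' unfolding rhs_def by (metis index_vec)
  then show ?thesis by blast
qed

locale resistive_network =
  fixes V :: "'v set" and E :: "'e set" and src tgt :: "'e \<Rightarrow> 'v" and L :: "'e \<Rightarrow> real"
  assumes finite_V: "finite V" and finite_E: "finite E"
    and ends_in_V: "\<And>e. e \<in> E \<Longrightarrow> src e \<in> V \<and> tgt e \<in> V"
    and length_pos: "\<And>e. e \<in> E \<Longrightarrow> L e > 0"
begin

abbreviation lap :: "('v \<Rightarrow> real) \<Rightarrow> 'v \<Rightarrow> real" where
  "lap \<equiv> laplacian E src tgt L"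

lemma green_identity:
  "(\<Sum>x\<in>V. w x * lap u x) =
     (\<Sum>e\<in>E. (w (src e) - w (tgt e)) * (u (src e) - u (tgt e)) / L e)"
  unfolding laplacian_def sum_distrib_left
proof (subst sum.swap, intro sum.cong refl)
  fix e assume e: "e \<in> E"
  have "(\<Sum>x\<in>V. w x * ((if src e = x then (u x - u (tgt e)) / L e else 0)
                        + (if tgt e = x then (u x - u (src e)) / L e else 0)))
      = (\<Sum>x\<in>V. (if src e = x then w x * ((u x - u (tgt e)) / L e) else 0))
        + (\<Sum>x\<in>V. (if tgt e = x then w x * ((u x - u (src e)) / L e) else 0))"
    unfolding sum.distrib[symmetric] by (intro sum.cong) (auto simp: distrib_left)
  also have "\<dots> = (w (src e) - w (tgt e)) * (u (src e) - u (tgt e)) / L e"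
    using ends_in_V[OF e] finite_V by (simp add: sum.delta divide_inverse algebra_simps)
  finally show "(\<Sum>x\<in>V. w x * ((if src e = x then (u x - u (tgt e)) / L e else 0)
                        + (if tgt e = x then (u x - u (src e)) / L e else 0)))
      = (w (src e) - w (tgt e)) * (u (src e) - u (tgt e)) / L e" .
qed

lemma laplacian_sum_eq_0: "(\<Sum>x\<in>V. lap u x) = 0"
  using green_identity[of "\<lambda>_. 1" u] by simp

lemma zero_energy_imp_const_on_edges:
  assumes "(\<Sum>x\<in>V. u x * lap u x) = 0"
  shows "\<forall>e\<in>E. u (src e) = u (tgt e)"
proof -
  let ?f = "\<lambda>e. (u (src e) - u (tgt e)) * (u (src e) - u (tgt e)) / L e"
  have "sum ?f E = 0"
    using green_identity[of u u] assms by simp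
  moreover have "\<forall>e\<in>E. ?f e \<ge> 0"
    using length_pos by (intro ballI divide_nonneg_pos) auto
  ultimately have "\<forall>e\<in>E. ?f e = 0"
    using sum_nonneg_eq_0_iff[OF finite_E, of ?f] by simp
  then show ?thesis
    using length_pos by fastforce
qed

lemma laplacian_cong:
  "(\<And>w. w \<in> V \<Longrightarrow> u w = u' w) \<Longrightarrow> x \<in> V \<Longrightarrow> lap u x = lap u' x"
  unfolding laplacian_def using ends_in_V by (intro sum.cong) auto

lemma laplacian_sum_over_subset:
  assumes "S \<subseteq> V"
  shows "(\<Sum>x\<in>S. lap u x) =
           (\<Sum>e\<in>E. (if src e \<in> S then (u (src e) - u (tgt e)) / L e else 0)
                 + (if tgt e \<in> S then (u (tgt e) - u (src e)) / L e else 0))"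
  unfolding laplacian_def using finite_subset[OF assms finite_V]
  by (subst sum.swap) (simp add: sum.distrib sum.delta)

definition laplacian_matrix :: "'v \<Rightarrow> 'v \<Rightarrow> real" where
  "laplacian_matrix x w = lap (\<lambda>v. of_bool (w = v)) x"

lemma laplacian_eq_matrix_mult:
  assumes "x \<in> V"
  shows "lap u x = (\<Sum>w\<in>V. laplacian_matrix x w * u w)"
proof -
  have "lap u x = lap (\<lambda>v. \<Sum>w\<in>V. u w * of_bool (w = v)) x"
    using sum_of_bool_eq_mult[OF finite_V, of _ u] by (intro laplacian_cong assms) (simp add: mult.commute)
  also have "\<dots> = (\<Sum>w\<in>V. laplacian_matrix x w * u w)"
    unfolding laplacian_sum[OF finite_V] laplacian_scale laplacian_matrix_def by (simp add: mult.commute)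
  finally show ?thesis .
qed

lemma laplacian_eq_neg_sum_others:
  "z \<in> V \<Longrightarrow> lap u z = - (\<Sum>x\<in>V - {z}. lap u x)"
  using laplacian_sum_eq_0[of u] finite_V by (simp add: sum.remove)

end

locale connected_network = resistive_network +
  assumes connected: "graph_connected V E src tgt"
begin

abbreviation volt where
  "volt \<equiv> voltage V E src tgt L"

abbreviation res where
  "res \<equiv> eff_res V E src tgt L"

lemma harmonic_imp_const:
  assumes "\<forall>x\<in>V. lap u x = 0" "x \<in> V" "y \<in> V"
  shows "u x = u y"
proof -
  have "(\<Sum>x\<in>V. u x * lap u x) = 0"
    using assms(1) by simp
  then have "\<forall>e\<in>E. u (src e) = u (tgt e)"
    by (rule zero_energy_imp_const_on_edges)
  moreover have "(x, y) \<in> (graph_adj E src tgt)\<^sup>*"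
    using connected assms(2,3) unfolding graph_connected_def by simp
  ultimately show ?thesis
    using graph_reachable_const[of x y E src tgt u] by simp
qed

lemma kirchhoff_unique:
  assumes "z \<in> V" "kirchhoff V E src tgt L z y u" "kirchhoff V E src tgt L z y u'"
  shows "u = u'"
proof
  fix x
  let ?d = "\<lambda>x. 1 * u x + (-1) * u' x + 0"
  have "\<forall>x\<in>V. lap ?d x = 0"
    using assms(2,3) unfolding kirchhoff_iff_laplacian laplacian_affine by simp
  then have "\<forall>x\<in>V. ?d x = ?d z"
    using harmonic_imp_const assms(1) by blast
  then show "u x = u' x"
    using assms unfolding kirchhoff_iff_laplacian by (cases "x \<in> V") auto
qed

lemma voltage_eqI:
  assumes "z \<in> V" "kirchhoff V E src tgt L z y u"
  shows "volt z x y = u x"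
proof -
  have "(THE u. kirchhoff V E src tgt L z y u) = u"
    using assms kirchhoff_unique by blast
  then show ?thesis
    unfolding voltage_def by simp
qed

lemma kirchhoff_exists:
  assumes z: "z \<in> V" and y: "y \<in> V"
  shows "\<exists>u. kirchhoff V E src tgt L z y u"
proof -
  define M where "M x w = (if x = z then of_bool (w = z) else laplacian_matrix x w)" for x w
  have row: "(\<Sum>w\<in>V. M x w * u w) = (if x = z then u z else lap u x)" if "x \<in> V" for x u
  proof (cases "x = z")
    case True
    then show ?thesis
      using z finite_V by (simp add: M_def sum_of_bool_eq_mult)
  next
    case False
    then show ?thesis
      using that by (simp add: M_def laplacian_eq_matrix_mult)
  qed
  have injective: "\<forall>x\<in>V. u x = 0" if hom: "\<forall>x\<in>V. (\<Sum>w\<in>V. M x w * u w) = 0" for u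
  proof -
    have off_sink: "lap u x = 0" if "x \<in> V" "x \<noteq> z" for x
      using hom row[of x u] that by simp
    then have harmonic: "\<forall>x\<in>V. lap u x = 0"
      using laplacian_eq_neg_sum_others[OF z, of u] by auto
    have "u z = 0"
      using hom row[of z u] z by simp
    then show ?thesis
      using harmonic_imp_const[OF harmonic _ z] by simp
  qed
  have "\<exists>u. \<forall>x\<in>V. (\<Sum>w\<in>V. M x w * u w) = (if x = z then 0 else of_bool (x = y))"
    by (rule injective_linear_system_solvable[OF finite_V]) (use injective in blast)
  then obtain u where u: "\<forall>x\<in>V. (\<Sum>w\<in>V. M x w * u w) = (if x = z then 0 else of_bool (x = y))" ..
  define u' where "u' w = (if w \<in> V then u w else 0)" for w
  have off_sink: "lap u' x = of_bool (x = y)" if "x \<in> V" "x \<noteq> z" for x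
  proof -
    have "lap u' x = lap u x"
      using that by (intro laplacian_cong) (auto simp: u'_def)
    then show ?thesis
      using u row[of x u] that by simp
  qed
  have "lap u' z = - (\<Sum>x\<in>V - {z}. of_bool (x = y))"
    using laplacian_eq_neg_sum_others[OF z, of u'] off_sink by simp
  also have "\<dots> = (if y = z then 0 else -1)"
    using finite_V y by (simp add: of_bool_def sum.delta')
  finally have "kirchhoff V E src tgt L z y u'"
    using off_sink u row[of z u] z unfolding kirchhoff_iff_laplacian by (auto simp: u'_def)
  then show ?thesis by blast
qed

lemma kirchhoff_voltage:
  assumes "z \<in> V" "y \<in> V"
  shows "kirchhoff V E src tgt L z y (\<lambda>x. volt z x y)"
proof -
  obtain u where u: "kirchhoff V E src tgt L z y u"
    using kirchhoff_exists assms by blast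
  have "(\<lambda>x. volt z x y) = u"
    using voltage_eqI[OF assms(1) u] by auto
  with u show ?thesis by simp
qed

lemma laplacian_voltage:
  "z \<in> V \<Longrightarrow> y \<in> V \<Longrightarrow> x \<in> V \<Longrightarrow>
     lap (\<lambda>w. volt z w y) x = (if x = y then 1 else 0) - (if x = z then 1 else 0)"
  using kirchhoff_voltage unfolding kirchhoff_iff_laplacian by blast

lemma voltage_at_sink: "z \<in> V \<Longrightarrow> y \<in> V \<Longrightarrow> volt z z y = 0"
  using kirchhoff_voltage unfolding kirchhoff_iff_laplacian by blast

lemma voltage_outside: "z \<in> V \<Longrightarrow> y \<in> V \<Longrightarrow> x \<notin> V \<Longrightarrow> volt z x y = 0"
  using kirchhoff_voltage unfolding kirchhoff_iff_laplacian by blast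

lemma voltage_source_eq_sink: "z \<in> V \<Longrightarrow> volt z x z = 0"
  by (rule voltage_eqI) (auto simp: kirchhoff_iff_laplacian laplacian_const)

lemma eff_res_self: "x \<in> V \<Longrightarrow> res x x = 0"
  unfolding eff_res_def by (rule voltage_source_eq_sink)

lemma voltage_sym:
  assumes "x \<in> V" "y \<in> V" "z \<in> V"
  shows "volt z y x = volt z x y"
proof -
  have "(\<Sum>w\<in>V. volt z w x * lap (\<lambda>w. volt z w y) w) = (\<Sum>w\<in>V. volt z w y * lap (\<lambda>w. volt z w x) w)"
    unfolding green_identity by (intro sum.cong refl) (simp add: algebra_simps)
  then show ?thesis
    using assms finite_V by (simp add: laplacian_voltage sum_mult_delta_diff voltage_at_sink)
qed

lemma voltage_eq_eff_res:
  assumes "x \<in> V" "y \<in> V" "q \<in> V"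
  shows "2 * volt q y x = res x q + res y q - res x y"
proof -
  define c where "c = volt q y x - volt q y y"
  define u where "u w = (if w \<in> V then volt q w x - volt q w y - c else 0)" for w
  have "kirchhoff V E src tgt L y x u"
    unfolding kirchhoff_iff_laplacian
  proof (intro conjI ballI allI impI)
    fix w assume w: "w \<in> V"
    have "lap u w = lap (\<lambda>w. 1 * volt q w x + (-1) * volt q w y + (-c)) w"
      using w by (intro laplacian_cong) (auto simp: u_def)
    then show "lap u w = (if w = x then 1 else 0) - (if w = y then 1 else 0)"
      unfolding laplacian_affine using laplacian_voltage assms w by simp
  qed (use assms in \<open>auto simp: u_def c_def\<close>)
  then have "res x y = volt q x x - volt q x y - c"
    using voltage_eqI[OF assms(2), of x] assms unfolding eff_res_def u_def by simp
  then show ?thesis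
    unfolding c_def eff_res_def using voltage_sym[OF assms] by simp
qed

lemma eff_res_sym: "x \<in> V \<Longrightarrow> y \<in> V \<Longrightarrow> res x y = res y x"
  using voltage_eq_eff_res[of x y x] voltage_sym[of x y x] voltage_at_sink[of x y] eff_res_self
  by simp

lemma voltage_add_swap:
  "x \<in> V \<Longrightarrow> y \<in> V \<Longrightarrow> z \<in> V \<Longrightarrow> volt z x y + volt y x z = res y z"
  using voltage_eq_eff_res[of y x z] voltage_eq_eff_res[of z x y] eff_res_sym by simp

text \<open>Twice the canonical measure of Chinburg and Rumely, with the mass \<open>L\<^sub>e / (L\<^sub>e + R\<^sub>e)\<close> of each
  edge split equally between its end points.\<close>

definition canonical_weight where
  "canonical_weight y =
     2 - (\<Sum>e\<in>E. (of_bool (y = src e) + of_bool (y = tgt e)) * res (src e) (tgt e) / L e)"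

lemma laplacian_eff_res:
  assumes "q \<in> V" "y \<in> V"
  shows "lap (\<lambda>w. res w q) y = canonical_weight y - 2 * of_bool (y = q)"
proof -
  have "lap (\<lambda>w. res w q) y = lap (\<lambda>w. 2 * volt q w y + 1 * res w y + (- res y q)) y"
  proof (intro laplacian_cong assms)
    fix w assume "w \<in> V"
    then show "res w q = 2 * volt q w y + 1 * res w y + - res y q"
      using voltage_eq_eff_res[of y w q] eff_res_sym[of y w] assms by simp
  qed
  also have "\<dots> = 2 * (1 - of_bool (y = q)) + lap (\<lambda>w. res w y) y"
    unfolding laplacian_affine using laplacian_voltage assms by simp
  also have "lap (\<lambda>w. res w y) y =
      - (\<Sum>e\<in>E. (of_bool (y = src e) + of_bool (y = tgt e)) * res (src e) (tgt e) / L e)"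
    unfolding laplacian_def sum_negf[symmetric]
  proof (intro sum.cong refl)
    fix e assume "e \<in> E"
    then show "(if src e = y then (res y y - res (tgt e) y) / L e else 0)
             + (if tgt e = y then (res y y - res (src e) y) / L e else 0)
             = - ((of_bool (y = src e) + of_bool (y = tgt e)) * res (src e) (tgt e) / L e)"
      using eff_res_self[OF assms(2)] eff_res_sym[of "src e" "tgt e"] ends_in_V
      by (auto simp: divide_inverse algebra_simps)
  qed
  finally show ?thesis
    by (simp add: canonical_weight_def)
qed

definition canonical_potential where
  "canonical_potential p = (\<Sum>x\<in>V. res x p * canonical_weight x)"

lemma sum_eff_res_mult_laplacian:
  assumes "p \<in> V" "q \<in> V"
  shows "(\<Sum>x\<in>V. res x p * lap (\<lambda>w. res w q) x) = canonical_potential p - 2 * res q p"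
proof -
  have "(\<Sum>x\<in>V. res x p * lap (\<lambda>w. res w q) x)
      = (\<Sum>x\<in>V. res x p * canonical_weight x - 2 * (of_bool (x = q) * res x p))"
    using assms by (intro sum.cong refl) (simp add: laplacian_eff_res algebra_simps)
  also have "\<dots> = canonical_potential p - 2 * res q p"
    using assms finite_V
    by (simp add: canonical_potential_def sum_subtractf sum_distrib_left[symmetric] sum_of_bool_eq_mult)
  finally show ?thesis .
qed

lemma energy_eff_res:
  assumes "p \<in> V"
  shows "(\<Sum>e\<in>E. (res p (src e) - res p (tgt e))\<^sup>2 / L e) = canonical_potential p"
proof -
  have "(\<Sum>e\<in>E. (res p (src e) - res p (tgt e))\<^sup>2 / L e)
      = (\<Sum>e\<in>E. (res (src e) p - res (tgt e) p) * (res (src e) p - res (tgt e) p) / L e)"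
    using ends_in_V assms by (intro sum.cong refl) (simp add: eff_res_sym power2_eq_square)
  also have "\<dots> = (\<Sum>x\<in>V. res x p * lap (\<lambda>w. res w p) x)"
    by (rule green_identity[symmetric])
  finally show ?thesis
    using sum_eff_res_mult_laplacian[OF assms assms] eff_res_self[OF assms] by simp
qed

text \<open>A discrete counterpart of the independence of the tau constant from the base point.\<close>

lemma canonical_potential_const:
  assumes "p \<in> V" "q \<in> V"
  shows "canonical_potential p = canonical_potential q"
proof -
  have "(\<Sum>x\<in>V. res x p * lap (\<lambda>w. res w q) x) = (\<Sum>x\<in>V. res x q * lap (\<lambda>w. res w p) x)"
    unfolding green_identity by (intro sum.cong refl) (simp add: algebra_simps)
  then show ?thesis
    using sum_eff_res_mult_laplacian assms eff_res_sym by simp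
qed

lemma edge_sum_eff_res:
  assumes "x \<in> V"
  shows "(\<Sum>e\<in>E. res (src e) (tgt e) / L e * (res x (src e) + res x (tgt e)))
       = (\<Sum>y\<in>V. (2 - canonical_weight y) * res x y)"
proof -
  have "(\<Sum>y\<in>V. (2 - canonical_weight y) * res x y)
      = (\<Sum>e\<in>E. \<Sum>y\<in>V. (of_bool (y = src e) + of_bool (y = tgt e))
                                * (res (src e) (tgt e) / L e * res x y))"
    unfolding canonical_weight_def
    by (subst sum.swap) (simp add: sum_distrib_right, intro sum.cong refl, simp)
  also have "\<dots> = (\<Sum>e\<in>E. res (src e) (tgt e) / L e * (res x (src e) + res x (tgt e)))"
  proof (intro sum.cong refl)
    fix e assume "e \<in> E"
    then have "src e \<in> V" "tgt e \<in> V"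
      using ends_in_V by auto
    then show "(\<Sum>y\<in>V. (of_bool (y = src e) + of_bool (y = tgt e)) * (res (src e) (tgt e) / L e * res x y))
        = res (src e) (tgt e) / L e * (res x (src e) + res x (tgt e))"
      using finite_V by (simp only: distrib_right sum.distrib sum_of_bool_eq_mult distrib_left)
  qed
  finally show ?thesis ..
qed

lemma sum_sum_eff_res_eq_edge_sums:
  assumes p: "p \<in> V"
  shows "(\<Sum>x\<in>V. \<Sum>y\<in>V. res x y) =
     real (card V) * ((1/4) * (\<Sum>e\<in>E. (res (src e) (tgt e))\<^sup>2 / L e)
                    + (3/4) * (\<Sum>e\<in>E. (res p (src e) - res p (tgt e))\<^sup>2 / L e))
   + (\<Sum>e\<in>E. 1 / L e * (\<Sum>x\<in>V. res (src e) (tgt e) * res x (src e)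
                              - ((res x (src e) + res (src e) (tgt e) - res x (tgt e)) / 2)\<^sup>2))"
proof -
  define n where "n = real (card V)"
  define K where "K = canonical_potential p"
  define \<rho> where "\<rho> e = res (src e) (tgt e)" for e
  define A where "A e x = \<rho> e / L e * (res x (src e) + res x (tgt e))" for e x
  define B where "B e x = (res x (src e) - res x (tgt e))\<^sup>2 / L e" for e x
  have sum_K: "(\<Sum>x\<in>V. canonical_potential x) = n * K"
    using canonical_potential_const[OF _ p] unfolding n_def K_def by simp
  have edge_term: "1 / L e * (\<rho> e * res x (src e) - ((res x (src e) + \<rho> e - res x (tgt e)) / 2)\<^sup>2)
      = A e x / 2 - B e x / 4 - (\<rho> e)\<^sup>2 / L e / 4" if "e \<in> E" for e x
  proof -
    have "L e \<noteq> 0"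
      using length_pos[OF that] by simp
    then show ?thesis
      unfolding A_def B_def by (simp add: field_simps power2_eq_square)
  qed
  have "(\<Sum>e\<in>E. 1 / L e * (\<Sum>x\<in>V. \<rho> e * res x (src e)
                                  - ((res x (src e) + \<rho> e - res x (tgt e)) / 2)\<^sup>2))
      = (\<Sum>e\<in>E. \<Sum>x\<in>V. A e x / 2 - B e x / 4 - (\<rho> e)\<^sup>2 / L e / 4)"
    unfolding sum_distrib_left using edge_term by simp
  also have "\<dots> = (\<Sum>e\<in>E. \<Sum>x\<in>V. A e x) / 2 - (\<Sum>e\<in>E. \<Sum>x\<in>V. B e x) / 4
                  - n * (\<Sum>e\<in>E. (\<rho> e)\<^sup>2 / L e) / 4"
    by (simp add: sum_subtractf sum_divide_distrib sum_distrib_left n_def)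
  also have "(\<Sum>e\<in>E. \<Sum>x\<in>V. B e x) = n * K"
    unfolding B_def using energy_eff_res sum_K by (subst sum.swap) simp
  also have "(\<Sum>e\<in>E. \<Sum>x\<in>V. A e x) = 2 * (\<Sum>x\<in>V. \<Sum>y\<in>V. res x y) - n * K"
  proof -
    have "(\<Sum>e\<in>E. \<Sum>x\<in>V. A e x) = (\<Sum>x\<in>V. \<Sum>y\<in>V. 2 * res x y - res y x * canonical_weight y)"
      unfolding A_def \<rho>_def using edge_sum_eff_res eff_res_sym
      by (subst sum.swap) (intro sum.cong refl, simp add: algebra_simps)
    then show ?thesis
      using sum_K by (simp add: sum_subtractf sum_distrib_left canonical_potential_def)
  qed
  finally show ?thesis
    using energy_eff_res[OF p] unfolding \<rho>_def K_def n_def by (simp add: algebra_simps)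
qed

lemma connected_network_delete_edge:
  assumes "\<not> is_bridge V E src tgt e"
  shows "connected_network V (E - {e}) src tgt L"
  using finite_V finite_E ends_in_V length_pos assms unfolding is_bridge_def
  by unfold_locales auto

lemma twice_voltage_edge:
  assumes "e \<in> E" "x \<in> V"
  shows "2 * volt (src e) x (tgt e) = res x (src e) + res (src e) (tgt e) - res x (tgt e)"
  using voltage_eq_eff_res[of "tgt e" x "src e"] eff_res_sym ends_in_V[OF assms(1)] assms(2)
  by simp

lemma voltage_edge_ends:
  assumes "e \<in> E"
  shows "volt (src e) (src e) (tgt e) = 0" "volt (src e) (tgt e) (tgt e) = res (src e) (tgt e)"
  using voltage_at_sink eff_res_sym ends_in_V[OF assms] unfolding eff_res_def by auto

lemma laplacian_voltage_delete_edge: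
  assumes "e \<in> E" "x \<in> V"
  shows "laplacian (E - {e}) src tgt L (\<lambda>w. volt (src e) w (tgt e)) x
     = (1 - res (src e) (tgt e) / L e) * ((if x = tgt e then 1 else 0) - (if x = src e then 1 else 0))"
proof -
  have "lap (\<lambda>w. volt (src e) w (tgt e)) x = (if x = tgt e then 1 else 0) - (if x = src e then 1 else 0)"
    using laplacian_voltage ends_in_V[OF assms(1)] assms(2) by blast
  moreover have "L e \<noteq> 0"
    using length_pos[OF assms(1)] by simp
  ultimately show ?thesis
    unfolding laplacian_remove_edge[OF assms(1) finite_E] using voltage_edge_ends[OF assms(1)]
    by (cases "x = tgt e"; cases "x = src e") (auto simp: field_simps)
qed

lemma eff_res_edge_neq_length:
  assumes e: "e \<in> E" and nonbridge: "\<not> is_bridge V E src tgt e"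
  shows "res (src e) (tgt e) \<noteq> L e"
proof
  assume \<rho>: "res (src e) (tgt e) = L e"
  interpret G: connected_network V "E - {e}" src tgt L
    using connected_network_delete_edge[OF nonbridge] .
  have "\<forall>x\<in>V. G.lap (\<lambda>w. volt (src e) w (tgt e)) x = 0"
    using laplacian_voltage_delete_edge[OF e] \<rho> length_pos[OF e] by simp
  then have "volt (src e) (tgt e) (tgt e) = volt (src e) (src e) (tgt e)"
    using G.harmonic_imp_const ends_in_V[OF e] by blast
  then show False
    using voltage_edge_ends[OF e] \<rho> length_pos[OF e] by simp
qed

text \<open>Away from a bridge, the voltage of \<open>\<Gamma> - e\<close> is a rescaling of that of \<open>\<Gamma>\<close>: deleting \<open>e\<close>
  only removes the current \<open>\<rho>/L\<close> it carries.\<close>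

lemma voltage_delete_edge:
  assumes e: "e \<in> E" and nonbridge: "\<not> is_bridge V E src tgt e"
  shows "voltage V (E - {e}) src tgt L (src e) x (tgt e)
           = L e / (L e - res (src e) (tgt e)) * volt (src e) x (tgt e)"
proof -
  interpret G: connected_network V "E - {e}" src tgt L
    using connected_network_delete_edge[OF nonbridge] .
  define c where "c = L e / (L e - res (src e) (tgt e))"
  have c: "c * (1 - res (src e) (tgt e) / L e) = 1"
    using eff_res_edge_neq_length[OF e nonbridge] length_pos[OF e]
    unfolding c_def by (simp add: field_simps)
  have "kirchhoff V (E - {e}) src tgt L (src e) (tgt e) (\<lambda>w. c * volt (src e) w (tgt e))"
    unfolding kirchhoff_iff_laplacian laplacian_scale
    using laplacian_voltage_delete_edge[OF e] c voltage_edge_ends[OF e] voltage_outside ends_in_V[OF e]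
    by (simp add: mult.assoc[symmetric])
  then show ?thesis
    using G.voltage_eqI ends_in_V[OF e] unfolding c_def by blast
qed

lemma R_edge_nonbridge:
  assumes e: "e \<in> E" and nonbridge: "\<not> is_bridge V E src tgt e"
  shows "R_edge V E src tgt L e = L e / (L e - res (src e) (tgt e)) * res (src e) (tgt e)"
proof -
  interpret G: connected_network V "E - {e}" src tgt L
    using connected_network_delete_edge[OF nonbridge] .
  have "R_edge V E src tgt L e = voltage V (E - {e}) src tgt L (src e) (tgt e) (tgt e)"
    unfolding R_edge_def using G.eff_res_sym ends_in_V[OF e] unfolding eff_res_def by metis
  then show ?thesis
    using voltage_delete_edge[OF e nonbridge] voltage_edge_ends[OF e] by simp
qed

lemma R_a_add_R_b_nonbridge:
  assumes e: "e \<in> E" and nonbridge: "\<not> is_bridge V E src tgt e" and p: "p \<in> V"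
  shows "R_a V E src tgt L e p + R_b V E src tgt L e p = R_edge V E src tgt L e"
proof -
  interpret G: connected_network V "E - {e}" src tgt L
    using connected_network_delete_edge[OF nonbridge] .
  show ?thesis
    unfolding R_a_def R_b_def R_edge_def
    using G.voltage_add_swap[of p "tgt e" "src e"] G.eff_res_sym ends_in_V[OF e] p by simp
qed

lemma eff_res_bridge:
  assumes e: "e \<in> E" and bridge: "is_bridge V E src tgt e"
  shows "res (src e) (tgt e) = L e"
proof -
  let ?R = "(graph_adj (E - {e}) src tgt)\<^sup>*"
  let ?\<Phi> = "\<lambda>w. volt (src e) w (tgt e)"
  define C where "C = {w \<in> V. (tgt e, w) \<in> ?R}"
  have C: "C \<subseteq> V" "tgt e \<in> C" "src e \<notin> C"
    using bridge_ends_unreachable[OF connected _ bridge] ends_in_V[OF e] unfolding C_def by auto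
  have closed: "src e' \<in> C \<longleftrightarrow> tgt e' \<in> C" if "e' \<in> E - {e}" for e'
  proof -
    have "(src e', tgt e') \<in> graph_adj (E - {e}) src tgt" "(tgt e', src e') \<in> graph_adj (E - {e}) src tgt"
      using that unfolding graph_adj_def by auto
    then show ?thesis
      using ends_in_V that unfolding C_def
      using rtrancl.rtrancl_into_rtrancl[of "tgt e" "src e'" "graph_adj (E - {e}) src tgt" "tgt e'"]
            rtrancl.rtrancl_into_rtrancl[of "tgt e" "tgt e'" "graph_adj (E - {e}) src tgt" "src e'"]
      by blast
  qed
  define flow where "flow e' = (if src e' \<in> C then (?\<Phi> (src e') - ?\<Phi> (tgt e')) / L e' else 0)
                             + (if tgt e' \<in> C then (?\<Phi> (tgt e') - ?\<Phi> (src e')) / L e' else 0)" for e'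
  txt \<open>The unit current entering at \<open>tgt e\<close> leaves the side \<open>C\<close> of the bridge only through \<open>e\<close>.\<close>
  have "(1::real) = (\<Sum>x\<in>C. (if x = tgt e then 1 else 0) - (if x = src e then 1 else 0))"
    using C finite_subset[OF C(1) finite_V] by (simp add: sum_subtractf sum.delta sum.delta')
  also have "\<dots> = (\<Sum>x\<in>C. lap ?\<Phi> x)"
    using C laplacian_voltage ends_in_V[OF e] by (intro sum.cong refl) auto
  also have "\<dots> = (\<Sum>e'\<in>E. flow e')"
    unfolding flow_def by (rule laplacian_sum_over_subset[OF C(1)])
  also have "\<dots> = flow e + (\<Sum>e'\<in>E - {e}. flow e')"
    using e finite_E by (simp add: sum.remove)
  also have "(\<Sum>e'\<in>E - {e}. flow e') = 0"
    using closed by (intro sum.neutral) (auto simp: flow_def add_divide_distrib[symmetric])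
  also have "flow e = (?\<Phi> (tgt e) - ?\<Phi> (src e)) / L e"
    using C unfolding flow_def by simp
  finally show ?thesis
    using voltage_edge_ends[OF e] length_pos[OF e] by simp
qed

lemma voltage_bridge:
  assumes e: "e \<in> E" and bridge: "is_bridge V E src tgt e" and w: "w \<in> V"
  shows "volt (src e) w (tgt e) = 0 \<or> volt (src e) w (tgt e) = L e"
proof -
  interpret G: resistive_network V "E - {e}" src tgt L
    using finite_V finite_E ends_in_V length_pos by unfold_locales auto
  have "\<forall>x\<in>V. G.lap (\<lambda>w. volt (src e) w (tgt e)) x = 0"
    using laplacian_voltage_delete_edge[OF e] eff_res_bridge[OF e bridge] length_pos[OF e] by simp
  then have const: "\<forall>e'\<in>E - {e}. volt (src e) (src e') (tgt e) = volt (src e) (tgt e') (tgt e)"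
    by (intro G.zero_energy_imp_const_on_edges) simp
  consider "(src e, w) \<in> (graph_adj (E - {e}) src tgt)\<^sup>*" | "(tgt e, w) \<in> (graph_adj (E - {e}) src tgt)\<^sup>*"
    using reachable_delete_edge[of "src e" w E src tgt e] connected ends_in_V[OF e] w
    unfolding graph_connected_def by blast
  then show ?thesis
  proof cases
    case 1
    then have "volt (src e) (src e) (tgt e) = volt (src e) w (tgt e)"
      using graph_reachable_const[of "src e" w "E - {e}" src tgt "\<lambda>x. volt (src e) x (tgt e)"] const
      by simp
    then show ?thesis
      using voltage_edge_ends[OF e] by simp
  next
    case 2
    then have "volt (src e) (tgt e) (tgt e) = volt (src e) w (tgt e)"
      using graph_reachable_const[of "tgt e" w "E - {e}" src tgt "\<lambda>x. volt (src e) x (tgt e)"] const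
      by simp
    then show ?thesis
      using voltage_edge_ends[OF e] eff_res_bridge[OF e bridge] by simp
  qed
qed

lemma length_add_R_edge_nonbridge:
  assumes e: "e \<in> E" and nonbridge: "\<not> is_bridge V E src tgt e"
  shows "L e + R_edge V E src tgt L e = L e / (L e - res (src e) (tgt e)) * L e"
  using eff_res_edge_neq_length[OF e nonbridge] length_pos[OF e]
  unfolding R_edge_nonbridge[OF e nonbridge] by (simp add: field_simps)

lemma nonbridge_scale_nonzero:
  "e \<in> E \<Longrightarrow> \<not> is_bridge V E src tgt e \<Longrightarrow> L e / (L e - res (src e) (tgt e)) \<noteq> 0"
  using eff_res_edge_neq_length length_pos by fastforce

lemma y_term1_eq:
  assumes e: "e \<in> E"
  shows "y_term1 V E src tgt L e = (res (src e) (tgt e))\<^sup>2 / L e"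
proof (cases "is_bridge V E src tgt e")
  case True
  then show ?thesis
    using eff_res_bridge[OF e True] length_pos[OF e] unfolding y_term1_def by (simp add: power2_eq_square)
next
  case False
  define c where "c = L e / (L e - res (src e) (tgt e))"
  have c: "c \<noteq> 0" "L e \<noteq> 0"
    using nonbridge_scale_nonzero[OF e False] length_pos[OF e] unfolding c_def by auto
  have R: "R_edge V E src tgt L e = c * res (src e) (tgt e)"
    using R_edge_nonbridge[OF e False] unfolding c_def .
  have LR: "L e + R_edge V E src tgt L e = c * L e"
    using length_add_R_edge_nonbridge[OF e False] unfolding c_def .
  show ?thesis
    using False c unfolding y_term1_def Let_def LR unfolding R
    by (simp add: field_simps power2_eq_square)
qed

lemma y_term2_eq:
  assumes e: "e \<in> E" and p: "p \<in> V"
  shows "y_term2 V E src tgt L e p = (res p (src e) - res p (tgt e))\<^sup>2 / L e"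
proof -
  have diff: "res p (src e) - res p (tgt e) = 2 * volt (src e) p (tgt e) - res (src e) (tgt e)"
    using twice_voltage_edge[OF e p] by simp
  show ?thesis
  proof (cases "is_bridge V E src tgt e")
    case True
    then show ?thesis
      using voltage_bridge[OF e True p] eff_res_bridge[OF e True] length_pos[OF e]
      unfolding y_term2_def diff by (auto simp: power2_eq_square)
  next
    case False
    define c where "c = L e / (L e - res (src e) (tgt e))"
    have c: "c \<noteq> 0" "L e \<noteq> 0"
      using nonbridge_scale_nonzero[OF e False] length_pos[OF e] unfolding c_def by auto
    have LR: "L e + R_edge V E src tgt L e = c * L e"
      using length_add_R_edge_nonbridge[OF e False] unfolding c_def .
    have "R_a V E src tgt L e p - R_b V E src tgt L e p = 2 * R_a V E src tgt L e p - R_edge V E src tgt L e"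
      using R_a_add_R_b_nonbridge[OF e False p] by simp
    also have "\<dots> = c * (res p (src e) - res p (tgt e))"
      unfolding R_a_def voltage_delete_edge[OF e False] R_edge_nonbridge[OF e False] diff c_def
      by (simp add: algebra_simps)
    finally have RaRb: "R_a V E src tgt L e p - R_b V E src tgt L e p = c * (res p (src e) - res p (tgt e))" .
    show ?thesis
      using False c unfolding y_term2_def Let_def LR RaRb
      by (simp add: field_simps power2_eq_square)
  qed
qed

lemma coeff_edge_eq:
  assumes e: "e \<in> E"
  shows "coeff_edge V E src tgt L e = res (src e) (tgt e) / L e"
proof (cases "is_bridge V E src tgt e")
  case True
  then show ?thesis
    using eff_res_bridge[OF e True] length_pos[OF e] unfolding coeff_edge_def by simp
next
  case False
  define c where "c = L e / (L e - res (src e) (tgt e))"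
  have c: "c \<noteq> 0" "L e \<noteq> 0"
    using nonbridge_scale_nonzero[OF e False] length_pos[OF e] unfolding c_def by auto
  have R: "R_edge V E src tgt L e = c * res (src e) (tgt e)"
    using R_edge_nonbridge[OF e False] unfolding c_def .
  have LR: "L e + R_edge V E src tgt L e = c * L e"
    using length_add_R_edge_nonbridge[OF e False] unfolding c_def .
  show ?thesis
    using False c unfolding coeff_edge_def Let_def LR unfolding R
    by (simp add: field_simps)
qed

lemma contr_V_eq:
  "e \<in> E \<Longrightarrow> src e \<noteq> tgt e \<Longrightarrow> contr_V V src tgt e = V - {tgt e}"
  using ends_in_V unfolding contr_V_def contr_map_def by (auto simp: image_iff)

lemma connected_network_contract_edge:
  assumes e: "e \<in> E" and nonloop: "src e \<noteq> tgt e"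
  shows "connected_network (contr_V V src tgt e) (E - {e})
           (contr_map src tgt e \<circ> src) (contr_map src tgt e \<circ> tgt) L"
proof unfold_locales
  show "finite (contr_V V src tgt e)" "finite (E - {e})"
    using finite_V finite_E unfolding contr_V_def by auto
  show "(contr_map src tgt e \<circ> src) e' \<in> contr_V V src tgt e
        \<and> (contr_map src tgt e \<circ> tgt) e' \<in> contr_V V src tgt e" "L e' > 0" if "e' \<in> E - {e}" for e'
    using ends_in_V length_pos that unfolding contr_V_def by auto
  show "graph_connected (contr_V V src tgt e) (E - {e}) (contr_map src tgt e \<circ> src) (contr_map src tgt e \<circ> tgt)"
    unfolding graph_connected_def
  proof (intro ballI)
    fix x' y' assume "x' \<in> contr_V V src tgt e" "y' \<in> contr_V V src tgt e"
    then obtain x y where "x \<in> V" "y \<in> V" "x' = contr_map src tgt e x" "y' = contr_map src tgt e y"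
      unfolding contr_V_def by auto
    then show "(x', y') \<in> (graph_adj (E - {e}) (contr_map src tgt e \<circ> src) (contr_map src tgt e \<circ> tgt))\<^sup>*"
      using reachable_contract_edge[of x y E src tgt e] connected unfolding graph_connected_def by blast
  qed
qed

lemma eff_res_edge_nonzero:
  assumes e: "e \<in> E" and nonloop: "src e \<noteq> tgt e"
  shows "res (src e) (tgt e) \<noteq> 0"
proof
  assume \<rho>: "res (src e) (tgt e) = 0"
  let ?\<Phi> = "\<lambda>w. volt (src e) w (tgt e)"
  have ends: "src e \<in> V" "tgt e \<in> V"
    using ends_in_V[OF e] by auto
  have lap\<Phi>: "lap ?\<Phi> x = (if x = tgt e then 1 else 0) - (if x = src e then 1 else 0)" if "x \<in> V" for x
    using laplacian_voltage ends that by blast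
  have "(\<Sum>x\<in>V. ?\<Phi> x * lap ?\<Phi> x) = ?\<Phi> (tgt e) - ?\<Phi> (src e)"
    using sum_mult_delta_diff[OF finite_V ends(2,1)] lap\<Phi> by simp
  also have "\<dots> = 0"
    using voltage_edge_ends[OF e] \<rho> by simp
  finally have "\<forall>e\<in>E. ?\<Phi> (src e) = ?\<Phi> (tgt e)"
    by (rule zero_energy_imp_const_on_edges)
  then have "lap ?\<Phi> (tgt e) = 0"
    by (rule laplacian_eq_0_if_const_on_edges)
  then show False
    using lap\<Phi>[OF ends(2)] nonloop by simp
qed

text \<open>In the contracted graph the voltage with sink \<open>src e\<close> and source \<open>x\<close> is that of \<open>\<Gamma>\<close>
  corrected by the multiple of the voltage across \<open>e\<close> that makes it agree at both ends of \<open>e\<close>.\<close>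

lemma kirchhoff_contract_edge:
  assumes e: "e \<in> E" and nonloop: "src e \<noteq> tgt e" and x: "x \<in> V" "x \<noteq> tgt e"
  shows "kirchhoff (contr_V V src tgt e) (E - {e})
           (contr_map src tgt e \<circ> src) (contr_map src tgt e \<circ> tgt) L (src e) x
           (\<lambda>w. volt (src e) w x - volt (src e) (tgt e) x / res (src e) (tgt e) * volt (src e) w (tgt e))"
proof -
  have ends: "src e \<in> V" "tgt e \<in> V"
    using ends_in_V[OF e] by auto
  have V': "contr_V V src tgt e = V - {tgt e}"
    using contr_V_eq[OF e nonloop] .
  define k where "k = volt (src e) (tgt e) x / res (src e) (tgt e)"
  define W where "W w = 1 * volt (src e) w x + (- k) * volt (src e) w (tgt e) + 0" for w
  have W_src: "W (src e) = 0"
    unfolding W_def using voltage_at_sink ends x voltage_edge_ends[OF e] by simp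
  have W_tgt: "W (tgt e) = 0"
    unfolding W_def k_def using voltage_edge_ends[OF e] eff_res_edge_nonzero[OF e nonloop] by simp
  have lap_W: "lap W w = ((if w = x then 1 else 0) - (if w = src e then 1 else 0))
                         - k * ((if w = tgt e then 1 else 0) - (if w = src e then 1 else 0))" if "w \<in> V" for w
    unfolding W_def laplacian_affine using laplacian_voltage ends x that by simp
  have lap_del_W: "laplacian (E - {e}) src tgt L W w = lap W w" for w
    unfolding laplacian_remove_edge[OF e finite_E] using W_src W_tgt by auto
  have "kirchhoff (contr_V V src tgt e) (E - {e})
          (contr_map src tgt e \<circ> src) (contr_map src tgt e \<circ> tgt) L (src e) x W"
    unfolding kirchhoff_iff_laplacian
  proof (intro conjI ballI allI impI)
    fix y assume "y \<in> contr_V V src tgt e"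
    then have y: "y \<in> V" "y \<noteq> tgt e"
      using V' by auto
    have W_ends: "W (src e) = W (tgt e)"
      using W_src W_tgt by simp
    show "laplacian (E - {e}) (contr_map src tgt e \<circ> src) (contr_map src tgt e \<circ> tgt) L W y
            = (if y = x then 1 else 0) - (if y = src e then 1 else 0)"
      unfolding laplacian_contract_edge[of W src e tgt y "E - {e}", OF W_ends y(2)] lap_del_W
      using lap_W y ends x nonloop by auto
  next
    fix w assume "w \<notin> contr_V V src tgt e"
    then have "w \<notin> V \<or> w = tgt e"
      using V' by auto
    then show "W w = 0"
      unfolding W_def using voltage_outside ends x W_tgt unfolding W_def by auto
  qed (rule W_src)
  moreover have "W = (\<lambda>w. volt (src e) w x - volt (src e) (tgt e) x / res (src e) (tgt e) * volt (src e) w (tgt e))"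
    unfolding W_def k_def by auto
  ultimately show ?thesis
    by simp
qed

lemma contr_res_eq:
  assumes e: "e \<in> E" and nonloop: "src e \<noteq> tgt e" and x: "x \<in> V" "x \<noteq> tgt e"
  shows "contr_res V E src tgt L e x (src e)
           = res x (src e) - (volt (src e) x (tgt e))\<^sup>2 / res (src e) (tgt e)"
proof -
  interpret C: connected_network "contr_V V src tgt e" "E - {e}"
      "contr_map src tgt e \<circ> src" "contr_map src tgt e \<circ> tgt" L
    using connected_network_contract_edge[OF e nonloop] .
  have ends: "src e \<in> V" "tgt e \<in> V"
    using ends_in_V[OF e] by auto
  have "src e \<in> contr_V V src tgt e"
    using contr_V_eq[OF e nonloop] ends nonloop by simp
  then have "C.volt (src e) x x
      = volt (src e) x x - volt (src e) (tgt e) x / res (src e) (tgt e) * volt (src e) x (tgt e)"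
    by (rule C.voltage_eqI[OF _ kirchhoff_contract_edge[OF e nonloop x]])
  then have "contr_res V E src tgt L e x (src e)
      = volt (src e) x x - volt (src e) (tgt e) x / res (src e) (tgt e) * volt (src e) x (tgt e)"
    unfolding contr_res_def eff_res_def .
  also have "\<dots> = res x (src e) - (volt (src e) x (tgt e))\<^sup>2 / res (src e) (tgt e)"
    unfolding eff_res_def using voltage_sym[of x "tgt e" "src e"] ends x
    by (simp add: power2_eq_square)
  finally show ?thesis .
qed

lemma coeff_edge_mult_sum_contr_res:
  assumes e: "e \<in> E"
  shows "coeff_edge V E src tgt L e * (\<Sum>x\<in>contr_V V src tgt e. contr_res V E src tgt L e x (src e))
       = 1 / L e * (\<Sum>x\<in>V. res (src e) (tgt e) * res x (src e)
                              - ((res x (src e) + res (src e) (tgt e) - res x (tgt e)) / 2)\<^sup>2)"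
proof -
  have ends: "src e \<in> V" "tgt e \<in> V"
    using ends_in_V[OF e] by auto
  define \<rho> where "\<rho> = res (src e) (tgt e)"
  define g where "g x = \<rho> * res x (src e) - ((res x (src e) + \<rho> - res x (tgt e)) / 2)\<^sup>2" for x
  have coeff: "coeff_edge V E src tgt L e = \<rho> / L e"
    unfolding \<rho>_def by (rule coeff_edge_eq[OF e])
  show ?thesis
  proof (cases "src e = tgt e")
    case True
    then have "\<rho> = 0"
      unfolding \<rho>_def using eff_res_self ends by simp
    moreover have "g x = 0" for x
      unfolding g_def using True \<open>\<rho> = 0\<close> by simp
    ultimately show ?thesis
      unfolding coeff \<rho>_def[symmetric] g_def[symmetric] by simp
  next
    case False
    have \<rho>: "\<rho> \<noteq> 0"
      unfolding \<rho>_def by (rule eff_res_edge_nonzero[OF e False])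
    have "(\<Sum>x\<in>contr_V V src tgt e. contr_res V E src tgt L e x (src e)) = (\<Sum>x\<in>V - {tgt e}. g x / \<rho>)"
      unfolding contr_V_eq[OF e False]
    proof (intro sum.cong refl)
      fix x assume x: "x \<in> V - {tgt e}"
      have \<Phi>: "volt (src e) x (tgt e) = (res x (src e) + \<rho> - res x (tgt e)) / 2"
        using twice_voltage_edge[OF e] x unfolding \<rho>_def by (simp add: field_simps)
      have "contr_res V E src tgt L e x (src e) = res x (src e) - (volt (src e) x (tgt e))\<^sup>2 / \<rho>"
        using contr_res_eq[OF e False] x unfolding \<rho>_def by blast
      also have "\<dots> = g x / \<rho>"
        unfolding \<Phi> g_def using \<rho> by (simp add: field_simps)
      finally show "contr_res V E src tgt L e x (src e) = g x / \<rho>" .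
    qed
    also have "\<dots> = (\<Sum>x\<in>V. g x) / \<rho>"
    proof -
      have "g (tgt e) = 0"
        unfolding g_def \<rho>_def using eff_res_self eff_res_sym ends by (simp add: power2_eq_square)
      then show ?thesis
        using sum.remove[OF finite_V ends(2), of g] by (simp add: sum_divide_distrib)
    qed
    finally show ?thesis
      unfolding coeff \<rho>_def[symmetric] g_def[symmetric] using \<rho> by simp
  qed
qed

end

theorem proposition3p6:
  fixes V :: "'v set" and E :: "'e set" and src tgt :: "'e \<Rightarrow> 'v"
    and L :: "'e \<Rightarrow> real" and p :: 'v
  assumes "metrized_graph V E src tgt L"
    and "p \<in> V"
  shows "2 * kirchhoff_index V E src tgt L =
           real (card V) * y_inv V E src tgt L p
         + (\<Sum>e\<in>E. coeff_edge V E src tgt L e *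
              (\<Sum>x\<in>contr_V V src tgt e. contr_res V E src tgt L e x (src e)))"
proof -
  interpret connected_network V E src tgt L
    using assms(1) unfolding metrized_graph_def by unfold_locales auto
  have "(\<Sum>e\<in>E. y_term1 V E src tgt L e) = (\<Sum>e\<in>E. (res (src e) (tgt e))\<^sup>2 / L e)"
    "(\<Sum>e\<in>E. y_term2 V E src tgt L e p) = (\<Sum>e\<in>E. (res p (src e) - res p (tgt e))\<^sup>2 / L e)"
    using y_term1_eq y_term2_eq assms(2) by (auto intro: sum.cong)
  moreover have "(\<Sum>e\<in>E. coeff_edge V E src tgt L e *
                   (\<Sum>x\<in>contr_V V src tgt e. contr_res V E src tgt L e x (src e)))
      = (\<Sum>e\<in>E. 1 / L e * (\<Sum>x\<in>V. res (src e) (tgt e) * res x (src e)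
                              - ((res x (src e) + res (src e) (tgt e) - res x (tgt e)) / 2)\<^sup>2))"
    using coeff_edge_mult_sum_contr_res by (auto intro: sum.cong)
  ultimately show ?thesis
    unfolding kirchhoff_index_def y_inv_def sum_sum_eff_res_eq_edge_sums[OF assms(2)] by simp
qed

end
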